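(* Let $N\ge 1$ be an integer and let $P_N$ be the polynomial defined in the context. Then for every $t\in(0,\pi)$ with $t\neq \frac{2\pi}{N+2}$, $$ P_N(e^{it})=\frac{1}{2\bigl(\cos t-\cos\frac{2\pi}{N+2}\bigr)}+\frac{1-\cos\frac{2\pi}{N+2}}{(N+2)(1-\cos t)}\cdot\frac{\sin t\,\sin\frac{(N+2)t}{2}}{\bigl(\cos t-\cos\frac{2\pi}{N+2}\bigr)^2}\,e^{\frac{(N+2)}{2}it}. $$
   Context: For an integer $N\ge1$ put $b_0=1$ and, for $k=1,\dots,N$, $$b_k=\frac{(N-k+3)\sin\frac{(k+1)\pi}{N+2}-(N-k+1)\sin\frac{(k-1)\pi}{N+2}}{(N+2)\sin\frac{\pi}{N+2}}$$ (these are the cosine coefficients of the Egerváry–Szász polynomial $\frac{2}{N+2}\bigl|\sum_{k=0}^N\sin\frac{\pi(k+1)}{N+2}e^{ikt}\bigr|^2=\sum_{k=0}^N b_k\cos kt$). Define the polynomial $$P_N(z)=\frac{1}{\sin\frac{2\pi}{N+2}}\sum_{k=1}^N b_k\sin\frac{k\pi}{N+2}\,z^k,$$ which satisfies $P_N(0)=0$, $P_N'(0)=1$ (e.g. $P_1(z)=z$, $P_2(z)=z+\tfrac12z^2$, $P_3(z)=z+\tfrac{2}{\sqrt5}z^2+\tfrac12(1-\tfrac1{\sqrt5})z^3$, $P_4(z)=z+\tfrac76z^2+\tfrac23z^3+\tfrac16z^4$). *)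

theory Defs
  imports "HOL-Analysis.Analysis"
begin

text \<open>Cosine coefficients of the Egervary-Szasz polynomial (b_0 = 1).\<close>
definition es_coeff :: "nat \<Rightarrow> nat \<Rightarrow> real" where
  "es_coeff N k = (if k = 0 then 1 else
     ((real N - real k + 3) * sin ((real k + 1) * pi / (real N + 2))
      - (real N - real k + 1) * sin ((real k - 1) * pi / (real N + 2)))
     / ((real N + 2) * sin (pi / (real N + 2))))"

definition P_poly :: "nat \<Rightarrow> complex \<Rightarrow> complex" where
  "P_poly N z = (1 / complex_of_real (sin (2 * pi / (real N + 2)))) *
     (\<Sum>k = 1..N. complex_of_real (es_coeff N k * sin (real k * pi / (real N + 2))) * z ^ k)"

end

theory Submission
  imports Defs
begin

(* Write q = e^{2 pi i/(N+2)}. The addition formulas turn b_k sin(k pi/(N+2)) into a combination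
   of sin(2k pi/(N+2)), cos(2k pi/(N+2)) and cot(pi/(N+2)), so every coefficient of P_N is a
   combination of q^k, q^-k, k q^k and k q^-k. Hence P_N(z) is a combination of the geometric
   sums of (q z)^k, (z/q)^k, z^k and of their derivative-type sums k x^k; summing them in closed
   form and using q^(N+2) = 1 gives a rational closed form for P_N(z). At z = e^{it} its
   denominator factors (1 - q z)(q - z) and (1 - z)^2 are, up to powers of z and q, the real
   quantities cos t - cos(2 pi/(N+2)) and 1 - cos t, which produces the stated formula. *)

lemma sum_power_atLeast1:
  fixes x :: "'a::field"
  assumes "x \<noteq> 1"
  shows "(\<Sum>k=1..n. x^k) = x * (1 - x^n) / (1 - x)"
  using assms by (simp add: sum_gp field_simps)

lemma sum_of_nat_mult_power_atLeast1:
  fixes x :: "'a::field"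
  assumes "x \<noteq> 1"
  shows "(\<Sum>k=1..n. of_nat k * x^k) = x * (1 - (of_nat n + 1) * x^n + of_nat n * x^(n+1)) / (1 - x)^2"
proof (induction n)
  case (Suc n)
  have "1 - x \<noteq> 0" using assms by simp
  have "(\<Sum>k=1..Suc n. of_nat k * x^k) = (\<Sum>k=1..n. of_nat k * x^k) + of_nat (Suc n) * x^Suc n"
    by simp
  also have "\<dots> = x * (1 - (of_nat (Suc n) + 1) * x^Suc n + of_nat (Suc n) * x^(Suc n+1)) / (1 - x)^2"
    unfolding Suc.IH using \<open>1 - x \<noteq> 0\<close> by (simp add: field_simps) algebra
  finally show ?case .
qed simp

lemma of_nat_add_2_neq_0: "of_nat n + 2 \<noteq> (0::'a::semiring_char_0)"
proof -
  have "of_nat n + (2::'a) = of_nat (n + 2)" by (simp only: of_nat_add of_nat_numeral)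
  then show ?thesis by (simp only: of_nat_eq_0_iff)
qed

lemma of_real_sin_cis: "complex_of_real (sin x) = (cis x - 1 / cis x) / (2 * \<i>)"
  by (simp add: complex_eq_iff flip: inverse_eq_divide)

lemma of_real_cos_cis: "complex_of_real (cos x) = (cis x + 1 / cis x) / 2"
  by (simp add: complex_eq_iff flip: inverse_eq_divide)

lemma of_real_cos_diff_cis:
  "complex_of_real (cos t - cos s) = (1 - cis s * cis t) * (cis s - cis t) / (2 * cis s * cis t)"
  unfolding of_real_diff of_real_cos_cis by (simp add: field_simps)

lemma of_real_one_minus_cos_cis: "complex_of_real (1 - cos t) = - ((1 - cis t)^2) / (2 * cis t)"
  unfolding of_real_diff of_real_cos_cis by (simp add: field_simps power2_eq_square)

lemma of_real_sin_mult_sin_half_cis: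
  "complex_of_real (sin t * sin (real n * t / 2)) * cis (real n / 2 * t)
    = - (cis t - 1 / cis t) * (cis t ^ n - 1) / 4"
proof -
  have "cis (real n / 2 * t) * cis (real n / 2 * t) = cis t ^ n"
    by (simp add: cis_mult Complex.DeMoivre mult.commute)
  then show ?thesis
    unfolding of_real_mult of_real_sin_cis by (simp add: field_simps power2_eq_square)
qed

lemma of_real_sin_mult_div_sin_cis:
  "complex_of_real (sin (real k * x) / sin x) = (cis x ^ k - 1 / cis x ^ k) / (cis x - 1 / cis x)"
  unfolding of_real_divide of_real_sin_cis Complex.DeMoivre by simp

lemma of_real_cot_div_sin_double_cis:
  assumes "sin x \<noteq> 0" "sin (2 * x) \<noteq> 0"
  shows "complex_of_real (cot x / sin (2 * x)) = - 2 * cis (2 * x) / (cis (2 * x) - 1)^2"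
proof -
  define w where "w = cis x"
  have q: "cis (2 * x) = w^2" by (simp add: w_def power2_eq_square cis_mult)
  have "w \<noteq> 0" by (simp add: w_def)
  have s: "of_real (sin x) = (w^2 - 1) / (2 * \<i> * w)" and c: "of_real (cos x) = (w^2 + 1) / (2 * w)"
    and s2: "of_real (sin (2 * x)) = (w^2 - 1) * (w^2 + 1) / (2 * \<i> * w^2)"
    unfolding of_real_sin_cis of_real_cos_cis q w_def[symmetric] using \<open>w \<noteq> 0\<close>
    by (simp_all add: field_simps power2_eq_square)
  have "w^2 - 1 \<noteq> 0" "w^2 + 1 \<noteq> 0" using assms s s2 by auto
  then show ?thesis
    unfolding cot_def of_real_divide s c s2 q using \<open>w \<noteq> 0\<close>
    by (simp add: divide_simps) algebra
qed

lemma cis_square_neq_1: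
  assumes "0 < x" "x < pi"
  shows "cis x ^ 2 \<noteq> 1"
proof
  assume "cis x ^ 2 = 1"
  then have "cis x = 1 \<or> cis x = -1" by (simp add: power2_eq_1_iff)
  then have "sin x = 0" by (auto simp: complex_eq_iff)
  with assms show False using sin_gt_zero by fastforce
qed

lemma es_coeff_mult_sin:
  fixes N k :: nat
  assumes "k \<ge> 1"
  defines "M \<equiv> real N + 2"
  shows "es_coeff N k * sin (real k * pi / M)
    = ((M - real k) * sin (2 * real k * pi / M) + (1 - cos (2 * real k * pi / M)) * cot (pi / M)) / M"
proof -
  define \<theta> where "\<theta> = pi / M"
  have "M \<ge> 2" by (simp add: M_def)
  then have "0 < \<theta>" "\<theta> < pi" by (auto simp: \<theta>_def field_simps)
  then have "sin \<theta> \<noteq> 0" using sin_gt_zero by fastforce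
  have args: "(real k + 1) * pi / M = real k * \<theta> + \<theta>" "(real k - 1) * pi / M = real k * \<theta> - \<theta>"
    "real k * pi / M = real k * \<theta>" "2 * real k * pi / M = 2 * (real k * \<theta>)"
    by (simp_all add: \<theta>_def ring_distribs add_divide_distrib diff_divide_distrib)
  have weights: "real N - real k + 3 = M - real k + 1" "real N - real k + 1 = M - real k - 1"
    by (simp_all add: M_def)
  have "es_coeff N k = ((M - real k + 1) * sin (real k * \<theta> + \<theta>)
      - (M - real k - 1) * sin (real k * \<theta> - \<theta>)) / (M * sin \<theta>)"
    using assms(1) unfolding es_coeff_def M_def[symmetric] args weights \<theta>_def[symmetric] by simp
  also have "\<dots> = (2 * (M - real k) * cos (real k * \<theta>) * sin \<theta> + 2 * sin (real k * \<theta>) * cos \<theta>)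
      / (M * sin \<theta>)"
    unfolding sin_add sin_diff by (simp add: algebra_simps)
  finally have coeff: "es_coeff N k = \<dots>" .
  show ?thesis
    unfolding coeff args \<theta>_def[symmetric] sin_double cos_double_sin cot_def
    using \<open>sin \<theta> \<noteq> 0\<close> \<open>M \<ge> 2\<close> by (simp add: field_simps power2_eq_square)
qed

text \<open>The coefficient of \<open>z^k\<close> in \<open>P_N\<close>, written in terms of \<open>q = e^{2\<pi>i/(N+2)}\<close>.\<close>

definition P_coeff :: "nat \<Rightarrow> 'a::field \<Rightarrow> nat \<Rightarrow> 'a" where
  "P_coeff N q k = q / ((of_nat N + 2) * (q^2 - 1)) * ((of_nat N + 2 - of_nat k) * (q^k - 1 / q^k))
     - q / ((of_nat N + 2) * (q - 1)^2) * (2 - q^k - 1 / q^k)"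

lemma P_coeff_eq_combination:
  fixes q :: "'a::field_char_0"
  assumes "q \<noteq> 0" "q^2 \<noteq> 1"
  shows "P_coeff N q k = ((of_nat N + 2 - of_nat k) * ((q^k - 1 / q^k) / (q - 1 / q))
      + (1 - (q^k + 1 / q^k) / 2) * (- 2 * q / (q - 1)^2)) / (of_nat N + 2)"
proof -
  have "(q - 1) * (q + 1) \<noteq> 0" using assms(2) by (simp add: power2_eq_square algebra_simps)
  moreover have factor: "q - 1 / q = (q - 1) * (q + 1) / q" "q^2 - 1 = (q - 1) * (q + 1)"
    using assms(1) by (simp_all add: field_simps power2_eq_square algebra_simps)
  ultimately show ?thesis unfolding P_coeff_def factor
    using of_nat_add_2_neq_0[of N, where 'a='a] assms(1)
    by (simp add: divide_simps) (simp add: algebra_simps)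
qed

lemma P_coeff_eq:
  fixes N k :: nat
  assumes "N \<ge> 1" "k \<ge> 1"
  defines "M \<equiv> real N + 2"
  shows "complex_of_real (es_coeff N k * sin (real k * pi / M)) / complex_of_real (sin (2 * pi / M))
    = P_coeff N (cis (2 * pi / M)) k"
proof -
  define q where "q = cis (2 * pi / M)"
  have "q \<noteq> 0" by (simp add: q_def)
  have "M \<ge> 3" using assms(1) by (simp add: M_def)
  then have "0 < pi / M" "2 * (pi / M) < pi" by (auto simp: field_simps)
  then have sin1: "sin (pi / M) \<noteq> 0" and sin2: "sin (2 * (pi / M)) \<noteq> 0"
    using sin_gt_zero[of "pi / M"] sin_gt_zero[of "2 * (pi / M)"] by auto
  have two: "2 * (pi / M) = 2 * pi / M" and arg: "2 * real k * pi / M = real k * (2 * pi / M)"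
    by simp_all
  have cot_ratio: "of_real (cot (pi / M) / sin (2 * pi / M)) = - 2 * q / (q - 1)^2"
    using of_real_cot_div_sin_double_cis[OF sin1 sin2] unfolding two q_def .
  have ratio: "of_real (sin (2 * real k * pi / M) / sin (2 * pi / M)) = (q^k - 1 / q^k) / (q - 1 / q)"
    unfolding arg q_def by (rule of_real_sin_mult_div_sin_cis)
  have cosk: "of_real (cos (2 * real k * pi / M)) = (q^k + 1 / q^k) / 2"
    unfolding arg q_def of_real_cos_cis Complex.DeMoivre ..
  have real_eq: "es_coeff N k * sin (real k * pi / M) / sin (2 * pi / M)
    = ((M - real k) * (sin (2 * real k * pi / M) / sin (2 * pi / M))
       + (1 - cos (2 * real k * pi / M)) * (cot (pi / M) / sin (2 * pi / M))) / M"
  proof -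
    have "(x * s + y * c) / D / S = (x * (s / S) + y * (c / S)) / D" for x y s c D S :: real
      by (simp add: add_divide_distrib mult.commute)
    then show ?thesis unfolding M_def es_coeff_mult_sin[OF assms(2)] .
  qed
  have complexify: "complex_of_real (((M - real k) * R + (1 - C) * T) / M)
      = ((of_nat N + 2 - of_nat k) * of_real R + (1 - of_real C) * of_real T) / (of_nat N + 2)"
    for R C T by (simp add: M_def)
  have "q^2 \<noteq> 1" unfolding q_def using \<open>0 < pi / M\<close> \<open>2 * (pi / M) < pi\<close> by (intro cis_square_neq_1) auto
  show ?thesis
    unfolding of_real_divide[symmetric] q_def[symmetric]
    unfolding P_coeff_eq_combination[OF \<open>q \<noteq> 0\<close> \<open>q^2 \<noteq> 1\<close>] real_eq complexify ratio cosk cot_ratio ..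
qed

text \<open>The linear factors of the denominators are named, so that \<open>field_simps\<close> clears them as
  atoms; what remains is a polynomial identity.\<close>

lemma power_sums_rational_identity:
  fixes q z m Z a b c r s :: "'a::field_char_0"
  assumes "q \<noteq> 0" "m \<noteq> 0" "a \<noteq> 0" "b \<noteq> 0" "c \<noteq> 0" "r \<noteq> 0" "s \<noteq> 0"
    and a: "a = 1 - z" and b: "b = 1 - q * z" and c: "c = q - z" and r: "r = q - 1" and s: "s = q + 1"
  shows "q / (m * (r * s)) * (m * (q * z * (1 - Z / q^2) / b - z / q * (1 - Z * q^2) / (c / q))
        - (q * z * (1 - (m - 1) * (Z / q^2) + (m - 2) * (Z / q^2 * (q * z))) / b^2
           - z / q * (1 - (m - 1) * (Z * q^2) + (m - 2) * (Z * q^2 * (z / q))) / (c / q)^2))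
      - q / (m * r^2) * (2 * (z * (1 - Z) / a) - q * z * (1 - Z / q^2) / b - z / q * (1 - Z * q^2) / (c / q))
    = z * q / (b * c) + q * r^2 * z^2 * (1 + z) * (Z * z^2 - 1) / (m * a * b^2 * c^2)"
  by (simp add: field_simps assms(1-7)) (unfold a b c r s, algebra)

lemma sum_P_coeff_mult_power_eq_power_sums:
  fixes N :: nat and q z :: "'a::field"
  defines "m \<equiv> of_nat N + 2"
  shows "(\<Sum>k=1..N. P_coeff N q k * z^k)
    = q / (m * (q^2 - 1)) * (m * ((\<Sum>k=1..N. (q * z)^k) - (\<Sum>k=1..N. (z / q)^k))
        - ((\<Sum>k=1..N. of_nat k * (q * z)^k) - (\<Sum>k=1..N. of_nat k * (z / q)^k)))
      - q / (m * (q - 1)^2) * (2 * (\<Sum>k=1..N. z^k) - (\<Sum>k=1..N. (q * z)^k) - (\<Sum>k=1..N. (z / q)^k))"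
proof -
  have linear: "(\<Sum>k\<in>K. A * f k - B * g k) = A * sum f K - B * sum g K"
    "(\<Sum>k\<in>K. c * (f k - g k) - (h k - l k)) = c * (sum f K - sum g K) - (sum h K - sum l K)"
    "(\<Sum>k\<in>K. c * f k - g k - h k) = c * sum f K - sum g K - sum h K"
    for K :: "nat set" and A B c :: 'a and f g h l :: "nat \<Rightarrow> 'a"
    by (simp_all add: sum_subtractf sum_distrib_left right_diff_distrib)
  have "(\<Sum>k=1..N. P_coeff N q k * z^k)
     = (\<Sum>k=1..N. q / (m * (q^2 - 1)) * (m * ((q * z)^k - (z / q)^k) - (of_nat k * (q * z)^k - of_nat k * (z / q)^k))
             - q / (m * (q - 1)^2) * (2 * z^k - (q * z)^k - (z / q)^k))"
    unfolding P_coeff_def m_def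
    by (intro sum.cong) (simp_all add: power_mult_distrib power_divide algebra_simps diff_divide_distrib add_divide_distrib)
  then show ?thesis unfolding linear .
qed

lemma sum_P_coeff_mult_power:
  fixes q z :: "'a::field_char_0"
  assumes "q^(N+2) = 1" "q^2 \<noteq> 1" "z \<noteq> 1" "q * z \<noteq> 1" "z \<noteq> q"
  defines "m \<equiv> of_nat N + 2"
  shows "(\<Sum>k=1..N. P_coeff N q k * z^k)
    = z * q / ((1 - q * z) * (q - z))
      + q * (q - 1)^2 * z^2 * (1 + z) * (z^(N+2) - 1) / (m * (1 - z) * (1 - q * z)^2 * (q - z)^2)"
proof -
  have "q \<noteq> 0" using assms(1) by (rule contrapos_pn) simp
  have "q^N * q^2 = 1" using assms(1) by (simp add: power_add power2_eq_square mult_ac)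
  then have qN: "q^N = 1 / q^2" using \<open>q \<noteq> 0\<close> by (simp add: field_simps)
  have "z / q \<noteq> 1" using assms(5) \<open>q \<noteq> 0\<close> by simp
  have "(q - 1) * (q + 1) \<noteq> 0" using assms(2) by (simp add: power2_eq_square algebra_simps)
  then have "q - 1 \<noteq> 0" "q + 1 \<noteq> 0" by auto
  have "1 - z \<noteq> 0" "1 - q * z \<noteq> 0" "q - z \<noteq> 0" using assms(3-5) by auto
  have factor: "q^2 - 1 = (q - 1) * (q + 1)" "1 - z / q = (q - z) / q"
    using \<open>q \<noteq> 0\<close> by (simp_all add: power2_eq_square field_simps algebra_simps)
  have "m \<noteq> 0" unfolding m_def by (rule of_nat_add_2_neq_0)
  have powers: "(q * z)^N = z^N / q^2" "(z / q)^N = z^N * q^2"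
    "(q * z)^(N+1) = z^N / q^2 * (q * z)" "(z / q)^(N+1) = z^N * q^2 * (z / q)"
    by (simp_all add: power_mult_distrib power_divide qN)
  have weights: "of_nat N + 1 = m - 1" "of_nat N = m - 2" by (simp_all add: m_def)
  show ?thesis
    unfolding sum_P_coeff_mult_power_eq_power_sums m_def[symmetric]
    unfolding sum_power_atLeast1[OF assms(3)] sum_power_atLeast1[OF assms(4)] sum_power_atLeast1[OF \<open>z / q \<noteq> 1\<close>]
      sum_of_nat_mult_power_atLeast1[OF assms(4)] sum_of_nat_mult_power_atLeast1[OF \<open>z / q \<noteq> 1\<close>]
    unfolding powers weights(1) power_add[of z N 2]
    unfolding weights(2) factor
    by (rule power_sums_rational_identity[OF \<open>q \<noteq> 0\<close> \<open>m \<noteq> 0\<close> \<open>1 - z \<noteq> 0\<close> \<open>1 - q * z \<noteq> 0\<close>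
          \<open>q - z \<noteq> 0\<close> \<open>q - 1 \<noteq> 0\<close> \<open>q + 1 \<noteq> 0\<close> refl refl refl refl refl])
qed

lemma P_poly_closed_form:
  fixes N :: nat and z :: complex
  defines "q \<equiv> cis (2 * pi / (real N + 2))"
  assumes "N \<ge> 1" "z \<noteq> 1" "q * z \<noteq> 1" "z \<noteq> q"
  shows "P_poly N z = z * q / ((1 - q * z) * (q - z))
    + q * (q - 1)^2 * z^2 * (1 + z) * (z^(N+2) - 1) / ((of_nat N + 2) * (1 - z) * (1 - q * z)^2 * (q - z)^2)"
proof -
  have "real N + 2 \<ge> 3" using assms(2) by simp
  then have "0 < 2 * pi / (real N + 2)" "2 * pi / (real N + 2) < pi" by (auto simp: field_simps)
  then have "q^2 \<noteq> 1" unfolding q_def by (rule cis_square_neq_1)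
  have "real (N + 2) * (2 * pi / (real N + 2)) = 2 * pi" by (simp add: field_simps)
  then have "q^(N+2) = 1" unfolding q_def Complex.DeMoivre by simp
  have "P_poly N z = (\<Sum>k=1..N. P_coeff N q k * z^k)"
    unfolding P_poly_def sum_distrib_left
  proof (intro sum.cong refl)
    fix k assume "k \<in> {1..N}"
    then have "P_coeff N q k = complex_of_real (es_coeff N k * sin (real k * pi / (real N + 2)))
        / complex_of_real (sin (2 * pi / (real N + 2)))"
      using P_coeff_eq[OF assms(2), of k] by (simp add: q_def)
    then show "1 / complex_of_real (sin (2 * pi / (real N + 2)))
        * (complex_of_real (es_coeff N k * sin (real k * pi / (real N + 2))) * z^k) = P_coeff N q k * z^k"
      by (simp only:) (simp add: divide_inverse mult_ac)
  qed
  also have "\<dots> = z * q / ((1 - q * z) * (q - z))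
    + q * (q - 1)^2 * z^2 * (1 + z) * (z^(N+2) - 1) / ((of_nat N + 2) * (1 - z) * (1 - q * z)^2 * (q - z)^2)"
    by (rule sum_P_coeff_mult_power[OF \<open>q^(N+2) = 1\<close> \<open>q^2 \<noteq> 1\<close> assms(3-5)])
  finally show ?thesis .
qed

lemma trig_formula_eq_closed_form:
  fixes N :: nat and t a :: real
  defines "z \<equiv> cis t" and "q \<equiv> cis a"
  assumes "z \<noteq> 1" "q * z \<noteq> 1" "z \<noteq> q"
  shows "complex_of_real (1 / (2 * (cos t - cos a)))
      + complex_of_real ((1 - cos a) / ((real N + 2) * (1 - cos t))
          * (sin t * sin ((real N + 2) * t / 2)) / (cos t - cos a)^2) * cis ((real N + 2) / 2 * t)
    = z * q / ((1 - q * z) * (q - z))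
      + q * (q - 1)^2 * z^2 * (1 + z) * (z^(N+2) - 1) / ((of_nat N + 2) * (1 - z) * (1 - q * z)^2 * (q - z)^2)"
proof -
  have nonzero: "z \<noteq> 0" "q \<noteq> 0" "1 - z \<noteq> 0" "1 - q * z \<noteq> 0" "q - z \<noteq> 0"
    using assms by (auto simp: z_def q_def)
  have M: "real N + 2 = real (N + 2)" by simp
  have assoc: "complex_of_real (x / y * s / c) * w = of_real x / of_real y * (of_real s * w) / of_real c"
    for x y s c :: real and w :: complex
    by simp
  show ?thesis
    unfolding M assoc
    unfolding of_real_sin_mult_sin_half_cis
    unfolding of_real_divide of_real_mult of_real_power of_real_1
      of_real_cos_diff_cis of_real_one_minus_cos_cis z_def[symmetric] q_def[symmetric]
    by (simp add: divide_simps add.commute nonzero of_nat_add_2_neq_0) algebra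
qed

theorem theorem1:
  fixes N :: nat and t :: real
  assumes "N \<ge> 1" and "0 < t" and "t < pi" and "t \<noteq> 2 * pi / (real N + 2)"
  shows "P_poly N (cis t) =
    complex_of_real (1 / (2 * (cos t - cos (2 * pi / (real N + 2)))))
    + complex_of_real ((1 - cos (2 * pi / (real N + 2))) / ((real N + 2) * (1 - cos t))
        * (sin t * sin ((real N + 2) * t / 2)) / (cos t - cos (2 * pi / (real N + 2)))^2)
      * cis ((real N + 2) / 2 * t)"
proof -
  define a where "a = 2 * pi / (real N + 2)"
  have "0 < a" "a < pi" using assms(1) by (auto simp: a_def field_simps)
  have "cis t \<noteq> 1" using assms(2,3) sin_gt_zero[of t] by (auto simp: complex_eq_iff)
  have "cos t \<noteq> cos a"
    using cos_inj_pi[of t a] assms(2-4) \<open>0 < a\<close> \<open>a < pi\<close> by (auto simp: a_def)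
  then have "(1 - cis a * cis t) * (cis a - cis t) \<noteq> 0"
    using of_real_cos_diff_cis[of t a] by auto
  then have qz: "cis a * cis t \<noteq> 1" and zq: "cis t \<noteq> cis a" by auto
  show ?thesis
    unfolding P_poly_closed_form[OF assms(1) \<open>cis t \<noteq> 1\<close> qz[unfolded a_def] zq[unfolded a_def]]
      trig_formula_eq_closed_form[OF \<open>cis t \<noteq> 1\<close> qz[unfolded a_def] zq[unfolded a_def]] ..
qed

end
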